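(* Let $\sigma:\mathbb{R}\to\mathbb{R}$ be an increasing odd homeomorphism. If $p\in X_+=\{(x,y)\in\mathbb{R}^2:x>0,\ y\geq0\}$ is $\sigma$-irrational, then $\bigcup_{n\geq0}\bigcup_{k\geq0}E_\sigma^{-n}\big(\{E_\sigma^k(p)\}\big)$ is dense in $X_+$.
   Context: $h_\sigma(x,y)=(x+\sigma^{-1}(y),y)$, $v_\sigma(x,y)=(x,\sigma(x)+y)$. Let $\Omega=\mathbb{R}^2\setminus\{(0,0)\}$, $X=\{(x,y)\in\Omega:xy\geq0,\ x\neq0\}$, $Y=\{(x,y)\in\Omega:xy\leq0,\ y\neq0\}$, and $A=h_\sigma(X)$, $B=v_\sigma(X)$, $C=h_\sigma^{-1}(Y)$, $D=v_\sigma^{-1}(Y)$ (these partition $\Omega$). The generalized Euclidean algorithm $E_\sigma:\Omega\to\Omega$ is $E_\sigma=h_\sigma^{-1}$ on $A$, $v_\sigma^{-1}$ on $B$, $h_\sigma$ on $C$, $v_\sigma$ on $D$; $E_\sigma^{-n}(S)$ is the preimage under the $n$-th iterate. The $\sigma$-rational lines are the axes $Ox,Oy$, the sets $m(Ox)$ with $m$ in the monoid generated by $h_\sigma,v_\sigma$, and the sets $m(Oy)$ with $m$ in the monoid generated by $h_\sigma^{-1},v_\sigma^{-1}$; a point is $\sigma$-irrational if it lies on none of them. *)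

theory Defs
  imports "HOL-Analysis.Analysis"
begin

type_synonym pt = "real \<times> real"

definition hs :: "(real \<Rightarrow> real) \<Rightarrow> pt \<Rightarrow> pt" where
  "hs \<sigma> p = (fst p + inv \<sigma> (snd p), snd p)"
definition hs_inv :: "(real \<Rightarrow> real) \<Rightarrow> pt \<Rightarrow> pt" where
  "hs_inv \<sigma> p = (fst p - inv \<sigma> (snd p), snd p)"
definition vs :: "(real \<Rightarrow> real) \<Rightarrow> pt \<Rightarrow> pt" where
  "vs \<sigma> p = (fst p, \<sigma> (fst p) + snd p)"
definition vs_inv :: "(real \<Rightarrow> real) \<Rightarrow> pt \<Rightarrow> pt" where
  "vs_inv \<sigma> p = (fst p, snd p - \<sigma> (fst p))"

definition Omega :: "pt set" where "Omega = UNIV - {(0,0)}"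
definition Xset :: "pt set" where
  "Xset = {p \<in> Omega. fst p * snd p \<ge> 0 \<and> fst p \<noteq> 0}"
definition Yset :: "pt set" where
  "Yset = {p \<in> Omega. fst p * snd p \<le> 0 \<and> snd p \<noteq> 0}"

definition Aset where "Aset \<sigma> = hs \<sigma> ` Xset"
definition Bset where "Bset \<sigma> = vs \<sigma> ` Xset"
definition Cset where "Cset \<sigma> = hs_inv \<sigma> ` Yset"
definition Dset where "Dset \<sigma> = vs_inv \<sigma> ` Yset"

text \<open>Generalized Euclidean algorithm; the value at the origin (outside Omega) is irrelevant.\<close>
definition Eucl :: "(real \<Rightarrow> real) \<Rightarrow> pt \<Rightarrow> pt" where
  "Eucl \<sigma> p = (if p \<in> Aset \<sigma> then hs_inv \<sigma> p
     else if p \<in> Bset \<sigma> then vs_inv \<sigma> p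
     else if p \<in> Cset \<sigma> then hs \<sigma> p
     else if p \<in> Dset \<sigma> then vs \<sigma> p else p)"

definition Eucl_preim :: "(real \<Rightarrow> real) \<Rightarrow> nat \<Rightarrow> pt set \<Rightarrow> pt set" where
  "Eucl_preim \<sigma> n S = {q \<in> Omega. (Eucl \<sigma> ^^ n) q \<in> S}"

inductive_set gen_monoid :: "(pt \<Rightarrow> pt) set \<Rightarrow> (pt \<Rightarrow> pt) set" for G where
  gm_id: "id \<in> gen_monoid G"
| gm_step: "f \<in> gen_monoid G \<Longrightarrow> g \<in> G \<Longrightarrow> g \<circ> f \<in> gen_monoid G"

definition Ox :: "pt set" where "Ox = {(x, 0) | x. True}"
definition Oy :: "pt set" where "Oy = {(0, y) | y. True}"

definition sigma_rational_lines :: "(real \<Rightarrow> real) \<Rightarrow> pt set set" where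
  "sigma_rational_lines \<sigma> = {Ox, Oy}
     \<union> {m ` Ox | m. m \<in> gen_monoid {hs \<sigma>, vs \<sigma>}}
     \<union> {m ` Oy | m. m \<in> gen_monoid {hs_inv \<sigma>, vs_inv \<sigma>}}"

definition sigma_irrational :: "(real \<Rightarrow> real) \<Rightarrow> pt \<Rightarrow> bool" where
  "sigma_irrational \<sigma> p \<longleftrightarrow> (\<forall>L \<in> sigma_rational_lines \<sigma>. p \<notin> L)"

definition Xplus :: "pt set" where "Xplus = {p. fst p > 0 \<and> snd p \<ge> 0}"

end

theory Submission
  imports Defs
begin

text \<open>On \<open>X\<^sub>+\<close> the algorithm acts as \<open>h\<^sub>\<sigma>\<^sup>-\<^sup>1\<close> below the graph of \<open>\<sigma>\<close> and as \<open>v\<^sub>\<sigma>\<^sup>-\<^sup>1\<close> on or above it,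
  while \<open>h\<^sub>\<sigma>\<close> and \<open>v\<^sub>\<sigma>\<close> map \<open>X\<^sub>+\<close> into itself and are undone by one step of the algorithm. Hence
  every image of an orbit point of \<open>p\<close> under a word in \<open>h\<^sub>\<sigma>, v\<^sub>\<sigma>\<close> lies in the union in question.
  These images accumulate at every point \<open>(s, 0)\<close> with \<open>s > 0\<close>, hence (by continuity of words) at
  every image of the positive \<open>x\<close>-axis, and those images are dense in \<open>X\<^sub>+\<close>.\<close>

definition gen_map :: "(real \<Rightarrow> real) \<Rightarrow> bool \<Rightarrow> pt \<Rightarrow> pt" where
  "gen_map \<sigma> c = (if c then hs \<sigma> else vs \<sigma>)"

definition gen_inv_map :: "(real \<Rightarrow> real) \<Rightarrow> bool \<Rightarrow> pt \<Rightarrow> pt" where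
  "gen_inv_map \<sigma> c = (if c then hs_inv \<sigma> else vs_inv \<sigma>)"

fun word_map :: "(real \<Rightarrow> real) \<Rightarrow> bool list \<Rightarrow> pt \<Rightarrow> pt" where
  "word_map \<sigma> [] = id"
| "word_map \<sigma> (c # cs) = word_map \<sigma> cs \<circ> gen_map \<sigma> c"

fun word_inv_map :: "(real \<Rightarrow> real) \<Rightarrow> bool list \<Rightarrow> pt \<Rightarrow> pt" where
  "word_inv_map \<sigma> [] = id"
| "word_inv_map \<sigma> (c # cs) = gen_inv_map \<sigma> c \<circ> word_inv_map \<sigma> cs"

definition below_graph :: "(real \<Rightarrow> real) \<Rightarrow> pt \<Rightarrow> bool" where
  "below_graph \<sigma> z \<longleftrightarrow> snd z < \<sigma> (fst z)"

text \<open>The itinerary lists the branches taken by the first \<open>n\<close> steps of the algorithm,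
  the most recent step first (\<open>True\<close> for \<open>h\<^sub>\<sigma>\<^sup>-\<^sup>1\<close>, \<open>False\<close> for \<open>v\<^sub>\<sigma>\<^sup>-\<^sup>1\<close>).\<close>
fun itinerary :: "(real \<Rightarrow> real) \<Rightarrow> pt \<Rightarrow> nat \<Rightarrow> bool list" where
  "itinerary \<sigma> z 0 = []"
| "itinerary \<sigma> z (Suc n) = below_graph \<sigma> ((Eucl \<sigma> ^^ n) z) # itinerary \<sigma> z n"

definition pos_axis_images :: "(real \<Rightarrow> real) \<Rightarrow> pt set" where
  "pos_axis_images \<sigma> = {word_map \<sigma> cs (s, 0) | cs s. 0 < s}"

definition word_grand_orbit :: "(real \<Rightarrow> real) \<Rightarrow> pt \<Rightarrow> pt set" where
  "word_grand_orbit \<sigma> p = {word_map \<sigma> ws ((Eucl \<sigma> ^^ k) p) | ws k. True}"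

lemma word_map_append: "word_map \<sigma> (xs @ ys) = word_map \<sigma> ys \<circ> word_map \<sigma> xs"
  by (induction xs) auto

lemma word_map_word_inv_map: "word_map \<sigma> cs (word_inv_map \<sigma> cs u) = u"
  by (induction cs arbitrary: u) (auto simp: gen_map_def gen_inv_map_def hs_def hs_inv_def vs_def vs_inv_def)

lemma word_map_in_gen_monoid: "word_map \<sigma> cs \<in> gen_monoid {hs \<sigma>, vs \<sigma>}"
proof (induction cs rule: rev_induct)
  case Nil
  show ?case by (simp only: word_map.simps gm_id)
next
  case (snoc c cs)
  have "gen_map \<sigma> c \<in> {hs \<sigma>, vs \<sigma>}" by (simp add: gen_map_def)
  with snoc have "gen_map \<sigma> c \<circ> word_map \<sigma> cs \<in> gen_monoid {hs \<sigma>, vs \<sigma>}"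
    by (rule gm_step)
  then show ?case by (simp only: word_map_append word_map.simps id_comp)
qed

lemma pos_axis_images_not_irrational:
  assumes "q \<in> pos_axis_images \<sigma>"
  shows "\<not> sigma_irrational \<sigma> q"
proof -
  obtain cs s where q: "q = word_map \<sigma> cs (s, 0)"
    using assms unfolding pos_axis_images_def by blast
  have "word_map \<sigma> cs ` Ox \<in> {m ` Ox | m. m \<in> gen_monoid {hs \<sigma>, vs \<sigma>}}"
    using word_map_in_gen_monoid by blast
  then have "word_map \<sigma> cs ` Ox \<in> sigma_rational_lines \<sigma>"
    unfolding sigma_rational_lines_def by (rule UnI1[OF UnI2])
  moreover have "q \<in> word_map \<sigma> cs ` Ox" using q by (auto simp: Ox_def)
  ultimately show ?thesis unfolding sigma_irrational_def by blast
qed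

text \<open>If \<open>x\<close> stayed above \<open>e\<close>, each vertical step would lower \<open>y\<close> by at least \<open>f e\<close>; and vertical
  steps recur, because horizontal steps alone, with \<open>y\<close> frozen, would drive \<open>x\<close> below zero.\<close>
lemma subtractive_sequence_fst_small:
  fixes x y :: "nat \<Rightarrow> real" and f h :: "real \<Rightarrow> real"
  assumes f_mono: "mono f" and f_pos: "\<And>t. 0 < t \<Longrightarrow> 0 < f t" and h_pos: "\<And>t. 0 < t \<Longrightarrow> 0 < h t"
    and x_pos: "\<And>n. 0 < x n" and y_pos: "\<And>n. 0 < y n"
    and step: "\<And>n. (x (Suc n) = x n - h (y n) \<and> y (Suc n) = y n)
                   \<or> (x (Suc n) = x n \<and> y (Suc n) = y n - f (x n))"
    and "0 < e"
  shows "\<exists>n. x n < e"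
proof (rule ccontr)
  assume "\<not> ?thesis"
  then have x_ge: "e \<le> x n" for n by (simp add: not_less)
  have "decseq y"
  proof (rule decseq_SucI)
    show "y (Suc n) \<le> y n" for n using step[of n] f_pos[OF x_pos[of n]] by auto
  qed
  have vertical_step: "\<exists>m\<ge>n. y (Suc m) = y m - f (x m)" for n
  proof (rule ccontr)
    assume "\<not> ?thesis"
    then have horizontal: "x (Suc m) = x m - h (y m) \<and> y (Suc m) = y m" if "n \<le> m" for m
      using step that by metis
    have "y (n + k) = y n \<and> x (n + k) = x n - real k * h (y n)" for k
    proof (induction k)
      case (Suc k)
      then show ?case using horizontal[of "n + k"] by (simp add: algebra_simps)
    qed simp
    moreover obtain k where "x n < real k * h (y n)"
      using reals_Archimedean3 h_pos y_pos by blast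
    ultimately show False using x_pos[of "n + k"] by simp
  qed
  have "\<exists>m. y m \<le> y 0 - real k * f e" for k
  proof (induction k)
    case (Suc k)
    then obtain n where n: "y n \<le> y 0 - real k * f e" by blast
    obtain m where m: "n \<le> m" "y (Suc m) = y m - f (x m)" using vertical_step by blast
    have "f e \<le> f (x m)" using f_mono x_ge by (simp add: monoD)
    moreover have "y m \<le> y n" using \<open>decseq y\<close> m(1) by (simp add: decseq_def)
    ultimately have "y (Suc m) \<le> y 0 - real (Suc k) * f e" using m n by (simp add: algebra_simps)
    then show ?case by blast
  qed (rule exI[of _ 0], simp)
  moreover obtain k where "y 0 < real k * f e"
    using reals_Archimedean3 f_pos \<open>0 < e\<close> by blast
  ultimately obtain n where "y n < 0" by (metis diff_less_0_iff_less le_less_trans)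
  with y_pos[of n] show False by linarith
qed

lemma decseq_tendsto_zero:
  fixes u :: "nat \<Rightarrow> real"
  assumes dec: "decseq u" and pos: "\<And>n. 0 \<le> u n" and small: "\<And>e. 0 < e \<Longrightarrow> \<exists>n. u n < e"
  shows "u \<longlonglongrightarrow> 0"
proof (rule decreasing_tendsto)
  show "\<forall>\<^sub>F n in sequentially. 0 \<le> u n" using pos by simp
  fix e :: real assume "0 < e"
  then obtain n where "u n < e" using small by blast
  then show "\<forall>\<^sub>F m in sequentially. u m < e"
    using dec by (auto simp: eventually_sequentially decseq_def intro: le_less_trans)
qed

locale increasing_homeo =
  fixes \<sigma> g :: "real \<Rightarrow> real"
  assumes sigma_strict_mono: "strict_mono \<sigma>"
    and sigma_zero: "\<sigma> 0 = 0"
    and sigma_homeo: "homeomorphism UNIV UNIV \<sigma> g"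
begin

lemma g_sigma [simp]: "g (\<sigma> x) = x" and sigma_g [simp]: "\<sigma> (g y) = y"
  using sigma_homeo by (simp_all add: homeomorphism_def)

lemma continuous_on_sigma: "continuous_on UNIV \<sigma>" and continuous_on_g: "continuous_on UNIV g"
  using sigma_homeo by (simp_all add: homeomorphism_def)

lemma inv_sigma: "inv \<sigma> = g"
  by (rule inv_equality) auto

lemma sigma_less_iff [simp]: "\<sigma> x < \<sigma> y \<longleftrightarrow> x < y"
  and sigma_le_iff [simp]: "\<sigma> x \<le> \<sigma> y \<longleftrightarrow> x \<le> y"
  using sigma_strict_mono by (simp_all add: strict_mono_less strict_mono_less_eq)

lemma g_less_iff [simp]: "g x < g y \<longleftrightarrow> x < y" and g_le_iff [simp]: "g x \<le> g y \<longleftrightarrow> x \<le> y"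
  by (metis sigma_g sigma_less_iff, metis sigma_g sigma_le_iff)

lemma g_zero [simp]: "g 0 = 0"
  by (metis g_sigma sigma_zero)

lemma sigma_pos_iff [simp]: "0 < \<sigma> x \<longleftrightarrow> 0 < x" and sigma_nonneg_iff [simp]: "0 \<le> \<sigma> x \<longleftrightarrow> 0 \<le> x"
  and g_pos_iff [simp]: "0 < g x \<longleftrightarrow> 0 < x" and g_nonneg_iff [simp]: "0 \<le> g x \<longleftrightarrow> 0 \<le> x"
  by (metis sigma_zero sigma_less_iff, metis sigma_zero sigma_le_iff,
      metis g_zero g_less_iff, metis g_zero g_le_iff)

lemma hs_eq: "hs \<sigma> p = (fst p + g (snd p), snd p)"
  by (simp add: hs_def inv_sigma)

lemma hs_inv_eq: "hs_inv \<sigma> p = (fst p - g (snd p), snd p)"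
  by (simp add: hs_inv_def inv_sigma)

lemma Eucl_below_graph:
  assumes "z \<in> Xplus" "below_graph \<sigma> z"
  shows "Eucl \<sigma> z = hs_inv \<sigma> z"
proof -
  obtain x y where z: "z = (x, y)" by force
  have "0 < x" "0 \<le> y" "y < \<sigma> x" using assms by (auto simp: z Xplus_def below_graph_def)
  moreover from \<open>y < \<sigma> x\<close> have "g y < x" by (metis g_sigma g_less_iff)
  ultimately have "hs_inv \<sigma> z \<in> Xset" by (auto simp: z hs_inv_eq Xset_def Omega_def)
  moreover have "z = hs \<sigma> (hs_inv \<sigma> z)" by (simp add: z hs_eq hs_inv_eq)
  ultimately have "z \<in> Aset \<sigma>" unfolding Aset_def by blast
  then show ?thesis by (simp add: Eucl_def)
qed

lemma Eucl_not_below_graph: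
  assumes "z \<in> Xplus" "\<not> below_graph \<sigma> z"
  shows "Eucl \<sigma> z = vs_inv \<sigma> z"
proof -
  obtain x y where z: "z = (x, y)" by force
  have xy: "0 < x" "\<sigma> x \<le> y" using assms by (auto simp: z Xplus_def below_graph_def)
  then have "0 < y" by (meson less_le_trans sigma_pos_iff)
  have "z \<notin> Aset \<sigma>"
  proof
    assume "z \<in> Aset \<sigma>"
    then obtain w where w: "w \<in> Xset" "z = hs \<sigma> w" unfolding Aset_def by blast
    then have "snd w = y" "fst w + g y = x" by (auto simp: z hs_eq)
    moreover have "0 \<le> fst w * snd w" "fst w \<noteq> 0" using w(1) by (auto simp: Xset_def)
    ultimately have "g y < x" using \<open>0 < y\<close> by (auto simp: zero_le_mult_iff)
    then show False using xy(2) by (metis sigma_g sigma_less_iff not_less)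
  qed
  moreover have "vs_inv \<sigma> z \<in> Xset" using xy by (auto simp: z vs_inv_def Xset_def Omega_def)
  moreover have "z = vs \<sigma> (vs_inv \<sigma> z)" by (simp add: z vs_def vs_inv_def)
  ultimately show ?thesis by (auto simp: Eucl_def Bset_def)
qed

lemma Eucl_eq_gen_inv_map: "z \<in> Xplus \<Longrightarrow> Eucl \<sigma> z = gen_inv_map \<sigma> (below_graph \<sigma> z) z"
  by (simp add: gen_inv_map_def Eucl_below_graph Eucl_not_below_graph)

lemma Eucl_cases:
  assumes "z \<in> Xplus"
  shows "Eucl \<sigma> z = (fst z - g (snd z), snd z) \<or> Eucl \<sigma> z = (fst z, snd z - \<sigma> (fst z))"
  using Eucl_eq_gen_inv_map[OF assms] by (simp add: gen_inv_map_def hs_inv_eq vs_inv_def)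

lemma Eucl_Xplus:
  assumes "z \<in> Xplus"
  shows "Eucl \<sigma> z \<in> Xplus"
proof (cases "below_graph \<sigma> z")
  case True
  then have "g (snd z) < fst z" by (metis below_graph_def g_less_iff g_sigma)
  with assms True show ?thesis by (auto simp: Eucl_below_graph Xplus_def hs_inv_eq)
next
  case False
  with assms show ?thesis by (auto simp: Eucl_not_below_graph Xplus_def vs_inv_def below_graph_def)
qed

lemma Eucl_le: "z \<in> Xplus \<Longrightarrow> Eucl \<sigma> z \<le> z"
  using Eucl_cases[of z] by (auto simp: Xplus_def less_eq_prod_def)

lemma funpow_Eucl_Xplus: "z \<in> Xplus \<Longrightarrow> (Eucl \<sigma> ^^ n) z \<in> Xplus"
  by (induction n) (auto simp: Eucl_Xplus)

lemma gen_map_Xplus: "z \<in> Xplus \<Longrightarrow> gen_map \<sigma> c z \<in> Xplus"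
  by (auto simp: gen_map_def Xplus_def hs_eq vs_def add_pos_nonneg)

lemma word_map_Xplus: "z \<in> Xplus \<Longrightarrow> word_map \<sigma> cs z \<in> Xplus"
  by (induction cs arbitrary: z) (auto simp: gen_map_Xplus)

lemma Eucl_gen_map:
  assumes "z \<in> Xplus"
  shows "Eucl \<sigma> (gen_map \<sigma> c z) = z"
proof -
  obtain x y where z: "z = (x, y)" by force
  have "0 < x" "0 \<le> y" using assms by (auto simp: z Xplus_def)
  moreover from \<open>0 < x\<close> have "\<sigma> (g y) < \<sigma> (x + g y)" by (subst sigma_less_iff) simp
  ultimately have "below_graph \<sigma> (hs \<sigma> z)" "\<not> below_graph \<sigma> (vs \<sigma> z)"
    by (simp_all add: below_graph_def z hs_eq vs_def)
  then show ?thesis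
    using gen_map_Xplus[OF assms, of c]
    by (auto simp: gen_map_def Eucl_below_graph Eucl_not_below_graph z hs_eq hs_inv_eq vs_def vs_inv_def)
qed

lemma funpow_Eucl_word_map: "z \<in> Xplus \<Longrightarrow> (Eucl \<sigma> ^^ length cs) (word_map \<sigma> cs z) = z"
  by (induction cs arbitrary: z) (simp_all add: funpow_Suc_right gen_map_Xplus Eucl_gen_map)

lemma funpow_Eucl_eq_word_inv_map:
  assumes "z \<in> Xplus"
  shows "(Eucl \<sigma> ^^ n) z = word_inv_map \<sigma> (itinerary \<sigma> z n) z"
proof (induction n)
  case (Suc n)
  have "(Eucl \<sigma> ^^ Suc n) z = gen_inv_map \<sigma> (below_graph \<sigma> ((Eucl \<sigma> ^^ n) z)) ((Eucl \<sigma> ^^ n) z)"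
    using Eucl_eq_gen_inv_map[OF funpow_Eucl_Xplus[OF assms]] by simp
  with Suc show ?case by simp
qed simp

lemma funpow_Eucl_on_axis:
  assumes "z \<in> Xplus" "snd ((Eucl \<sigma> ^^ n) z) = 0"
  shows "z \<in> pos_axis_images \<sigma>"
proof -
  obtain s where s: "(Eucl \<sigma> ^^ n) z = (s, 0)" using assms(2) by (metis prod.collapse)
  then have "0 < s" using funpow_Eucl_Xplus[OF assms(1), of n] by (simp add: Xplus_def)
  moreover have "z = word_map \<sigma> (itinerary \<sigma> z n) (s, 0)"
    using funpow_Eucl_eq_word_inv_map[OF assms(1), of n] s by (simp add: word_map_word_inv_map)
  ultimately show ?thesis unfolding pos_axis_images_def by blast
qed

lemma funpow_Eucl_tendsto_origin:
  assumes z: "z \<in> Xplus" and pos: "\<And>n. 0 < snd ((Eucl \<sigma> ^^ n) z)"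
  shows "(\<lambda>n. (Eucl \<sigma> ^^ n) z) \<longlonglongrightarrow> (0, 0)"
proof -
  define x y where "x n = fst ((Eucl \<sigma> ^^ n) z)" and "y n = snd ((Eucl \<sigma> ^^ n) z)" for n
  have x_pos: "0 < x n" for n using funpow_Eucl_Xplus[OF z] by (simp add: x_def Xplus_def)
  have y_pos: "0 < y n" for n using pos by (simp add: y_def)
  have step: "(x (Suc n) = x n - g (y n) \<and> y (Suc n) = y n)
            \<or> (x (Suc n) = x n \<and> y (Suc n) = y n - \<sigma> (x n))" for n
    using Eucl_cases[OF funpow_Eucl_Xplus[OF z, of n]] by (auto simp: x_def y_def)
  have "x (Suc n) \<le> x n \<and> y (Suc n) \<le> y n" for n
    using Eucl_le[OF funpow_Eucl_Xplus[OF z, of n]] by (simp add: x_def y_def less_eq_prod_def)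
  then have "decseq x" "decseq y" by (simp_all add: decseq_SucI)
  have mono_sigma: "mono \<sigma>" and mono_g: "mono g" by (simp_all add: monoI)
  have step_swapped: "(y (Suc n) = y n - \<sigma> (x n) \<and> x (Suc n) = x n)
                    \<or> (y (Suc n) = y n \<and> x (Suc n) = x n - g (y n))" for n
    using step[of n] by blast
  have x_small: "\<exists>n. x n < e" and y_small: "\<exists>n. y n < e" if "0 < e" for e
    using subtractive_sequence_fst_small[of \<sigma> g x y e] subtractive_sequence_fst_small[of g \<sigma> y x e]
      mono_sigma mono_g x_pos y_pos step step_swapped that by simp_all
  have "x \<longlonglongrightarrow> 0" "y \<longlonglongrightarrow> 0"
    using decseq_tendsto_zero \<open>decseq x\<close> \<open>decseq y\<close> x_pos y_pos x_small y_small
    by (meson less_imp_le)+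
  then show ?thesis using tendsto_Pair[of x 0 sequentially y 0] by (simp add: x_def y_def)
qed

lemma below_graph_mono:
  "below_graph \<sigma> u \<Longrightarrow> fst u \<le> fst v \<Longrightarrow> snd v \<le> snd u \<Longrightarrow> below_graph \<sigma> v"
  unfolding below_graph_def by (meson less_le_trans order_trans sigma_le_iff not_le)

lemma gen_inv_map_keeps_gap:
  assumes "0 \<le> l" "l \<le> fst v - fst u" "snd v \<le> snd u"
  shows "l \<le> fst (gen_inv_map \<sigma> c v) - fst (gen_inv_map \<sigma> c u)
    \<and> snd (gen_inv_map \<sigma> c v) \<le> snd (gen_inv_map \<sigma> c u)"
proof -
  have "g (snd v) \<le> g (snd u)" "\<sigma> (fst u) \<le> \<sigma> (fst v)" using assms by simp_all
  then show ?thesis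
    using assms by (auto simp: gen_inv_map_def hs_inv_eq vs_inv_def simp del: g_le_iff sigma_le_iff)
qed

lemma funpow_Eucl_keeps_gap:
  assumes z: "z1 \<in> Xplus" "z2 \<in> Xplus"
    and gap: "0 \<le> l" "l \<le> fst z2 - fst z1" "snd z2 \<le> snd z1"
    and same: "\<forall>i<n. below_graph \<sigma> ((Eucl \<sigma> ^^ i) z1) = below_graph \<sigma> ((Eucl \<sigma> ^^ i) z2)"
  shows "l \<le> fst ((Eucl \<sigma> ^^ n) z2) - fst ((Eucl \<sigma> ^^ n) z1)
    \<and> snd ((Eucl \<sigma> ^^ n) z2) \<le> snd ((Eucl \<sigma> ^^ n) z1)"
  using same
proof (induction n)
  case (Suc n)
  define u1 u2 where "u1 = (Eucl \<sigma> ^^ n) z1" and "u2 = (Eucl \<sigma> ^^ n) z2"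
  have "(Eucl \<sigma> ^^ Suc n) z1 = gen_inv_map \<sigma> (below_graph \<sigma> u1) u1"
    "(Eucl \<sigma> ^^ Suc n) z2 = gen_inv_map \<sigma> (below_graph \<sigma> u1) u2"
    using Eucl_eq_gen_inv_map funpow_Eucl_Xplus z Suc.prems by (simp_all add: u1_def u2_def)
  moreover have "l \<le> fst u2 - fst u1" "snd u2 \<le> snd u1"
    using Suc by (simp_all add: u1_def u2_def)
  ultimately show ?case using gen_inv_map_keeps_gap[OF gap(1)] by simp
qed (use gap in simp)

lemma itinerary_eq:
  "\<forall>i<n. below_graph \<sigma> ((Eucl \<sigma> ^^ i) z1) = below_graph \<sigma> ((Eucl \<sigma> ^^ i) z2)
    \<Longrightarrow> itinerary \<sigma> z1 n = itinerary \<sigma> z2 n"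
  by (induction n) auto

lemma continuous_on_gen_map: "continuous_on UNIV (gen_map \<sigma> c)"
  and continuous_on_gen_inv_map: "continuous_on UNIV (gen_inv_map \<sigma> c)"
proof -
  have "continuous_on UNIV (\<lambda>p::pt. g (snd p))"
    by (rule continuous_on_compose2[OF continuous_on_g]) (simp_all add: continuous_on_snd)
  moreover have "continuous_on UNIV (\<lambda>p::pt. \<sigma> (fst p))"
    by (rule continuous_on_compose2[OF continuous_on_sigma]) (simp_all add: continuous_on_fst)
  moreover have "gen_map \<sigma> c = (if c then (\<lambda>p. (fst p + g (snd p), snd p)) else (\<lambda>p. (fst p, \<sigma> (fst p) + snd p)))"
    "gen_inv_map \<sigma> c = (if c then (\<lambda>p. (fst p - g (snd p), snd p)) else (\<lambda>p. (fst p, snd p - \<sigma> (fst p))))"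
    by (auto simp: gen_map_def gen_inv_map_def hs_eq hs_inv_eq vs_def vs_inv_def)
  ultimately show "continuous_on UNIV (gen_map \<sigma> c)" "continuous_on UNIV (gen_inv_map \<sigma> c)"
    by (simp_all add: continuous_on_Pair continuous_on_add continuous_on_diff continuous_on_fst continuous_on_snd)
qed

lemma continuous_on_word_map: "continuous_on UNIV (word_map \<sigma> cs)"
proof (induction cs)
  case (Cons c cs)
  show ?case unfolding word_map.simps
    by (rule continuous_on_compose[OF continuous_on_gen_map continuous_on_subset[OF Cons subset_UNIV]])
qed simp

lemma continuous_on_word_inv_map: "continuous_on UNIV (word_inv_map \<sigma> cs)"
proof (induction cs)
  case (Cons c cs)
  show ?case unfolding word_inv_map.simps
    by (rule continuous_on_compose[OF Cons continuous_on_subset[OF continuous_on_gen_inv_map subset_UNIV]])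
qed simp

lemma mono_word_map: "mono (word_map \<sigma> cs)"
proof (induction cs)
  case (Cons c cs)
  have mono_gen_map: "mono (gen_map \<sigma> c)"
    by (auto simp: mono_def gen_map_def hs_eq vs_def less_eq_prod_def add_mono)
  show ?case unfolding word_map.simps by (rule monotone_on_o[OF Cons mono_gen_map subset_UNIV])
qed (simp add: mono_def)

lemma word_map_origin: "word_map \<sigma> cs (0, 0) = (0, 0)"
  by (induction cs) (auto simp: gen_map_def hs_eq vs_def sigma_zero)

lemma crossing_in_pos_axis_images:
  assumes "a1 \<le> a2" "0 < b"
    and left: "\<not> below_graph \<sigma> (word_inv_map \<sigma> cs (a1, b))"
    and right: "below_graph \<sigma> (word_inv_map \<sigma> cs (a2, b))"
  shows "\<exists>t\<in>{a1..a2}. (t, b) \<in> pos_axis_images \<sigma>"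
proof -
  define w where "w t = word_inv_map \<sigma> cs (t, b)" for t
  define \<phi> where "\<phi> t = snd (w t) - \<sigma> (fst (w t))" for t
  have "continuous_on UNIV w"
    unfolding w_def by (rule continuous_on_compose2[OF continuous_on_word_inv_map]) (simp_all add: continuous_on_Pair)
  then have "continuous_on UNIV \<phi>"
    unfolding \<phi>_def
    by (intro continuous_on_diff continuous_on_compose2[OF continuous_on_sigma] continuous_on_fst continuous_on_snd)
      simp_all
  then have "continuous_on {a1..a2} \<phi>" by (rule continuous_on_subset) simp
  moreover have "\<phi> a2 \<le> 0" "0 \<le> \<phi> a1" using left right by (simp_all add: \<phi>_def w_def below_graph_def)
  ultimately obtain t where t: "a1 \<le> t" "t \<le> a2" "\<phi> t = 0"
    using IVT2'[of \<phi> a2 0 a1] \<open>a1 \<le> a2\<close> by auto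
  define s where "s = fst (w t)"
  have w_t: "w t = vs \<sigma> (s, 0)" using t(3) by (simp add: \<phi>_def s_def vs_def prod_eq_iff)
  then have t_b: "(t, b) = word_map \<sigma> (False # cs) (s, 0)"
    using word_map_word_inv_map[of \<sigma> cs "(t, b)"] by (simp add: w_def gen_map_def)
  have "0 < s"
  proof (rule ccontr)
    assume "\<not> 0 < s"
    then have "\<sigma> s \<le> 0" by (metis not_less sigma_le_iff sigma_zero)
    with \<open>\<not> 0 < s\<close> have "vs \<sigma> (s, 0) \<le> (0, 0)" by (simp add: vs_def less_eq_prod_def)
    have "(t, b) = word_map \<sigma> cs (w t)" by (simp add: w_def word_map_word_inv_map)
    also have "\<dots> \<le> word_map \<sigma> cs (0, 0)"
      using w_t \<open>vs \<sigma> (s, 0) \<le> (0, 0)\<close> by (simp add: monoD[OF mono_word_map])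
    finally have "(t, b) \<le> (0, 0)" by (simp add: word_map_origin)
    with \<open>0 < b\<close> show False by (simp add: less_eq_prod_def)
  qed
  with t_b have "(t, b) \<in> pos_axis_images \<sigma>" unfolding pos_axis_images_def by blast
  with t show ?thesis by auto
qed

lemma funpow_Eucl_branches_differ:
  assumes "0 < a1" "a1 < a2" "0 < b" and pos: "\<And>n. 0 < snd ((Eucl \<sigma> ^^ n) (a2, b))"
  shows "\<exists>n. below_graph \<sigma> ((Eucl \<sigma> ^^ n) (a1, b)) \<noteq> below_graph \<sigma> ((Eucl \<sigma> ^^ n) (a2, b))"
proof (rule ccontr)
  assume "\<not> ?thesis"
  then have same: "\<forall>i<n. below_graph \<sigma> ((Eucl \<sigma> ^^ i) (a1, b)) = below_graph \<sigma> ((Eucl \<sigma> ^^ i) (a2, b))"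
    for n by blast
  have z: "(a1, b) \<in> Xplus" "(a2, b) \<in> Xplus" using assms by (simp_all add: Xplus_def)
  have "(\<lambda>n. fst ((Eucl \<sigma> ^^ n) (a2, b))) \<longlonglongrightarrow> 0"
    using tendsto_fst funpow_Eucl_tendsto_origin[OF z(2) pos] by fastforce
  then have "\<forall>\<^sub>F n in sequentially. fst ((Eucl \<sigma> ^^ n) (a2, b)) < a2 - a1"
    using assms by (simp add: order_tendstoD(2))
  then obtain n where "fst ((Eucl \<sigma> ^^ n) (a2, b)) < a2 - a1" by (auto simp: eventually_sequentially)
  moreover have "0 < fst ((Eucl \<sigma> ^^ n) (a1, b))" using funpow_Eucl_Xplus[OF z(1)] by (simp add: Xplus_def)
  moreover have "a2 - a1 \<le> fst ((Eucl \<sigma> ^^ n) (a2, b)) - fst ((Eucl \<sigma> ^^ n) (a1, b))"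
    using funpow_Eucl_keeps_gap[OF z, of "a2 - a1"] same assms by simp
  ultimately show False by linarith
qed

text \<open>Run the algorithm from both ends of the segment. While the two orbits take the same branches,
  the right one stays at least as far right and at most as high as the left one; so at the first
  step where the branches differ, the graph of \<open>\<sigma>\<close> separates the two orbit points.\<close>
lemma pos_axis_images_meet_segment:
  assumes "0 < a1" "a1 < a2" "0 < b"
  shows "\<exists>t\<in>{a1..a2}. (t, b) \<in> pos_axis_images \<sigma>"
proof (cases "\<exists>n. snd ((Eucl \<sigma> ^^ n) (a2, b)) = 0")
  case True
  have "(a2, b) \<in> Xplus" using assms by (simp add: Xplus_def)
  with True have "(a2, b) \<in> pos_axis_images \<sigma>" using funpow_Eucl_on_axis by blast
  then show ?thesis using assms by auto
next
  case False
  define z1 z2 where "z1 = (a1, b)" and "z2 = (a2, b)"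
  have z: "z1 \<in> Xplus" "z2 \<in> Xplus" using assms by (simp_all add: z1_def z2_def Xplus_def)
  have "0 < snd ((Eucl \<sigma> ^^ n) z2)" for n
    using False funpow_Eucl_Xplus[OF z(2), of n] by (auto simp: z2_def Xplus_def less_le)
  then obtain m where differ: "below_graph \<sigma> ((Eucl \<sigma> ^^ m) z1) \<noteq> below_graph \<sigma> ((Eucl \<sigma> ^^ m) z2)"
    and same: "\<forall>i<m. below_graph \<sigma> ((Eucl \<sigma> ^^ i) z1) = below_graph \<sigma> ((Eucl \<sigma> ^^ i) z2)"
    using exists_least_iff[THEN iffD1, OF funpow_Eucl_branches_differ[OF assms]]
    by (auto simp: z1_def z2_def)
  define u1 u2 where "u1 = (Eucl \<sigma> ^^ m) z1" and "u2 = (Eucl \<sigma> ^^ m) z2"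
  have "fst u1 \<le> fst u2" "snd u2 \<le> snd u1"
    using funpow_Eucl_keeps_gap[OF z, of 0] same assms by (simp_all add: u1_def u2_def z1_def z2_def)
  moreover have "below_graph \<sigma> u1 \<noteq> below_graph \<sigma> u2" using differ by (simp add: u1_def u2_def)
  ultimately have "\<not> below_graph \<sigma> u1" "below_graph \<sigma> u2" using below_graph_mono by blast+
  moreover have "itinerary \<sigma> z2 m = itinerary \<sigma> z1 m" using itinerary_eq same by metis
  then have "u1 = word_inv_map \<sigma> (itinerary \<sigma> z1 m) z1" "u2 = word_inv_map \<sigma> (itinerary \<sigma> z1 m) z2"
    using funpow_Eucl_eq_word_inv_map[OF z(1)] funpow_Eucl_eq_word_inv_map[OF z(2)]
    by (simp_all add: u1_def u2_def)
  ultimately show ?thesis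
    using crossing_in_pos_axis_images[of a1 a2 b] assms by (simp add: z1_def z2_def)
qed

lemma Xplus_subset_closure_pos_axis_images: "Xplus \<subseteq> closure (pos_axis_images \<sigma>)"
proof -
  have "{0<..} \<times> {0<..} \<subseteq> closure (pos_axis_images \<sigma>)"
  proof (clarify, unfold closure_approachable, intro allI impI)
    fix a b e :: real assume "0 < a" "0 < b" "0 < e"
    then have "0 < max (a / 2) (a - e / 2)" "max (a / 2) (a - e / 2) < a" by auto
    then obtain t where "t \<in> {max (a / 2) (a - e / 2)..a}" "(t, b) \<in> pos_axis_images \<sigma>"
      using pos_axis_images_meet_segment \<open>0 < b\<close> by blast
    moreover from this(1) have "dist (t, b) (a, b) < e"
      using \<open>0 < e\<close> by (simp add: dist_Pair_Pair dist_real_def)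
    ultimately show "\<exists>q\<in>pos_axis_images \<sigma>. dist q (a, b) < e" by blast
  qed
  then have "closure ({0<..} \<times> {0<..}) \<subseteq> closure (pos_axis_images \<sigma>)"
    by (metis closure_closure closure_mono)
  moreover have "Xplus \<subseteq> closure ({0<..} \<times> {0<..})"
    by (auto simp: closure_Times Xplus_def)
  ultimately show ?thesis by blast
qed

lemma funpow_Eucl_snd_pos:
  assumes "p \<in> Xplus" "sigma_irrational \<sigma> p"
  shows "0 < snd ((Eucl \<sigma> ^^ n) p)"
proof -
  have "snd ((Eucl \<sigma> ^^ n) p) \<noteq> 0"
    using funpow_Eucl_on_axis pos_axis_images_not_irrational assms by blast
  with funpow_Eucl_Xplus[OF assms(1), of n] show ?thesis by (simp add: Xplus_def less_le)
qed

lemma word_map_replicate_True: "word_map \<sigma> (replicate j True) z = (fst z + real j * g (snd z), snd z)"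
  by (induction j arbitrary: z) (auto simp: gen_map_def hs_eq algebra_simps)

text \<open>The orbit of \<open>p\<close> creeps towards the origin; from a point \<open>(x, y)\<close> on it close to the origin,
  iterating \<open>h\<^sub>\<sigma>\<close> moves horizontally in steps \<open>g y\<close> that are as small as we please.\<close>
lemma axis_point_in_closure_word_grand_orbit:
  assumes p: "p \<in> Xplus" "sigma_irrational \<sigma> p" and "0 < s"
  shows "(s, 0) \<in> closure (word_grand_orbit \<sigma> p)"
  unfolding closure_approachable
proof (intro allI impI)
  fix d :: real assume "0 < d"
  define x y where "x n = fst ((Eucl \<sigma> ^^ n) p)" and "y n = snd ((Eucl \<sigma> ^^ n) p)" for n
  have y_pos: "0 < y n" for n using funpow_Eucl_snd_pos[OF p] by (simp add: y_def)
  have "(\<lambda>n. (x n, y n)) \<longlonglongrightarrow> (0, 0)"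
    using funpow_Eucl_tendsto_origin[OF p(1)] funpow_Eucl_snd_pos[OF p] by (simp add: x_def y_def)
  then have "x \<longlonglongrightarrow> 0" "y \<longlonglongrightarrow> 0" using tendsto_fst tendsto_snd by fastforce+
  moreover have "isCont g 0" using continuous_on_g by (simp add: continuous_on_eq_continuous_at)
  ultimately have "(\<lambda>n. g (y n)) \<longlonglongrightarrow> 0" using isCont_tendsto_compose[of 0 g] by fastforce
  then have "\<forall>\<^sub>F n in sequentially. x n < s \<and> y n < d / 2 \<and> g (y n) < d / 2"
    using \<open>x \<longlonglongrightarrow> 0\<close> \<open>y \<longlonglongrightarrow> 0\<close> \<open>0 < s\<close> \<open>0 < d\<close> by (auto intro!: eventually_conj order_tendstoD(2))
  then obtain k where k: "x k < s" "y k < d / 2" "g (y k) < d / 2" by (auto simp: eventually_sequentially)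
  define c where "c = g (y k)"
  have "0 < c" using y_pos by (simp add: c_def)
  define j where "j = nat \<lfloor>(s - x k) / c\<rfloor>"
  have "real j = of_int \<lfloor>(s - x k) / c\<rfloor>" using k(1) \<open>0 < c\<close> by (simp add: j_def)
  then have "real j \<le> (s - x k) / c" "(s - x k) / c < real j + 1" by linarith+
  then have "\<bar>x k + real j * c - s\<bar> < c" using \<open>0 < c\<close> by (simp add: field_simps abs_if)
  define q where "q = word_map \<sigma> (replicate j True) ((Eucl \<sigma> ^^ k) p)"
  have "q = (x k + real j * c, y k)" by (simp add: q_def word_map_replicate_True x_def y_def c_def)
  then have "dist q (s, 0) \<le> \<bar>x k + real j * c - s\<bar> + \<bar>y k\<bar>"
    by (simp add: dist_Pair_Pair dist_real_def sqrt_sum_squares_le_sum_abs)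
  also have "\<dots> < d" using \<open>\<bar>x k + real j * c - s\<bar> < c\<close> k y_pos[of k] by (simp add: c_def)
  finally have "dist q (s, 0) < d" .
  moreover have "q \<in> word_grand_orbit \<sigma> p" unfolding word_grand_orbit_def q_def by blast
  ultimately show "\<exists>q\<in>word_grand_orbit \<sigma> p. dist q (s, 0) < d" by blast
qed

lemma Xplus_subset_closure_word_grand_orbit:
  assumes "p \<in> Xplus" "sigma_irrational \<sigma> p"
  shows "Xplus \<subseteq> closure (word_grand_orbit \<sigma> p)"
proof -
  have "pos_axis_images \<sigma> \<subseteq> closure (word_grand_orbit \<sigma> p)"
  proof
    fix q assume "q \<in> pos_axis_images \<sigma>"
    then obtain cs s where q: "q = word_map \<sigma> cs (s, 0)" and "0 < s"
      unfolding pos_axis_images_def by blast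
    have "word_map \<sigma> cs ` word_grand_orbit \<sigma> p \<subseteq> word_grand_orbit \<sigma> p"
    proof (rule image_subsetI)
      fix u assume "u \<in> word_grand_orbit \<sigma> p"
      then obtain ws k where "u = word_map \<sigma> ws ((Eucl \<sigma> ^^ k) p)" unfolding word_grand_orbit_def by blast
      then have "word_map \<sigma> cs u = word_map \<sigma> (ws @ cs) ((Eucl \<sigma> ^^ k) p)" by (simp add: word_map_append)
      then show "word_map \<sigma> cs u \<in> word_grand_orbit \<sigma> p" unfolding word_grand_orbit_def by blast
    qed
    then have "word_map \<sigma> cs ` closure (word_grand_orbit \<sigma> p) \<subseteq> closure (word_grand_orbit \<sigma> p)"
      using closure_subset
      by (intro image_closure_subset continuous_on_subset[OF continuous_on_word_map]) auto
    then show "q \<in> closure (word_grand_orbit \<sigma> p)"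
      using axis_point_in_closure_word_grand_orbit[OF assms \<open>0 < s\<close>] q by blast
  qed
  then have "closure (pos_axis_images \<sigma>) \<subseteq> closure (word_grand_orbit \<sigma> p)"
    by (metis closure_closure closure_mono)
  with Xplus_subset_closure_pos_axis_images show ?thesis by blast
qed

lemma word_grand_orbit_subset_Eucl_preim:
  assumes "p \<in> Xplus"
  shows "word_grand_orbit \<sigma> p \<subseteq> (\<Union>n. \<Union>k. Eucl_preim \<sigma> n {(Eucl \<sigma> ^^ k) p}) \<inter> Xplus"
proof
  fix q assume "q \<in> word_grand_orbit \<sigma> p"
  then obtain ws k where q: "q = word_map \<sigma> ws ((Eucl \<sigma> ^^ k) p)" unfolding word_grand_orbit_def by blast
  have "(Eucl \<sigma> ^^ k) p \<in> Xplus" using funpow_Eucl_Xplus[OF assms] .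
  then have "q \<in> Xplus" "(Eucl \<sigma> ^^ length ws) q = (Eucl \<sigma> ^^ k) p"
    using q word_map_Xplus funpow_Eucl_word_map by simp_all
  moreover from \<open>q \<in> Xplus\<close> have "q \<in> Omega" by (auto simp: Xplus_def Omega_def)
  ultimately show "q \<in> (\<Union>n. \<Union>k. Eucl_preim \<sigma> n {(Eucl \<sigma> ^^ k) p}) \<inter> Xplus"
    unfolding Eucl_preim_def by blast
qed

end

theorem proposition4:
  fixes \<sigma> :: "real \<Rightarrow> real" and p :: "real \<times> real"
  assumes "strict_mono \<sigma>"
    and "\<And>x. \<sigma> (- x) = - \<sigma> x"
    and "\<exists>g. homeomorphism UNIV UNIV \<sigma> g"
    and "p \<in> Xplus"
    and "sigma_irrational \<sigma> p"
  shows "Xplus \<subseteq> closure ((\<Union>n. \<Union>k. Eucl_preim \<sigma> n {(Eucl \<sigma> ^^ k) p}) \<inter> Xplus)"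
proof -
  obtain g where "homeomorphism UNIV UNIV \<sigma> g" using assms(3) by blast
  moreover have "\<sigma> 0 = 0" using assms(2)[of 0] by simp
  ultimately interpret increasing_homeo \<sigma> g using assms(1) by unfold_locales
  show ?thesis
    using Xplus_subset_closure_word_grand_orbit[OF assms(4,5)]
      closure_mono[OF word_grand_orbit_subset_Eucl_preim[OF assms(4)]] by blast
qed

end
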